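(* Let $N\ge1$, $H=(H_1,\dots,H_N)\in]0,1[^N$, $a\in\mathbb{R}^N\setminus\{(0,\dots,0)\}$, let $S^H$ be the mixed sub-fractional Brownian motion with parameters $N,a,H$, let $H_{i_0}=\min\{H_i; i\in\{1,\dots,N\},\ a_i\neq0\}$, and let $0<\epsilon<T$, $I=[\epsilon,T]$. There exists a constant $c>0$ such that for all $s,t\in I$, $$\mathrm{Var}\big(S^H(t)\,\big|\,S^H(s)\big)\ge c\,|s-t|^{2H_{i_0}},$$ where $\mathrm{Var}(Y|Z)$ denotes the conditional variance of $Y$ given $Z$.
   Context: Let $(\Omega,\mathcal F,\mathbb P)$ be a probability space. For $K\in]0,1[$, a fractional Brownian motion on $\mathbb{R}$ with Hurst index $K$ is a continuous centered Gaussian process $\{B^K(t),t\in\mathbb{R}\}$ with $\mathrm{Cov}(B^K(t),B^K(s))=\frac12(|t|^{2K}+|s|^{2K}-|t-s|^{2K})$. The sub-fractional Brownian motion (sfBm) of index $K$ is $\xi^K_t=(B^K_t+B^K_{-t})/\sqrt2$, $t\ge0$; it is a continuous centered Gaussian process with $\mathrm{Cov}(\xi^K_t,\xi^K_s)=s^{2K}+t^{2K}-\frac12\big((s+t)^{2K}+|t-s|^{2K}\big)$. For $N\ge1$, $H\in]0,1[^N$, $a\in\mathbb{R}^N\setminus\{0\}$, the mixed sub-fractional Brownian motion (msfBm) is $S^H(t)=\sum_{i=1}^N a_i\xi^{H_i}(t)$, $t\ge0$, where $\xi^{H_1},\dots,\xi^{H_N}$ are independent sfBms with indices $H_1,\dots,H_N$.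 Since $(S^H(t),S^H(s))$ is a centered Gaussian vector, $\mathrm{Var}(S^H(t)|S^H(s))$ is deterministic and equals $\inf_{b\in\mathbb{R}}\mathbb{E}(S^H(t)-bS^H(s))^2$. *)

theory Defs
  imports "HOL-Probability.Probability"
begin

definition sfbm_cov :: "real \<Rightarrow> real \<Rightarrow> real \<Rightarrow> real" where
  "sfbm_cov K t s = s powr (2*K) + t powr (2*K)
      - ((s + t) powr (2*K) + \<bar>t - s\<bar> powr (2*K)) / 2"

definition gaussian_rv :: "'a measure \<Rightarrow> ('a \<Rightarrow> real) \<Rightarrow> bool" where
  "gaussian_rv M Y \<longleftrightarrow> Y \<in> borel_measurable M \<and>
     ((\<exists>\<mu>. AE \<omega> in M. Y \<omega> = \<mu>) \<or>
      (\<exists>\<mu> \<sigma>. \<sigma> > 0 \<and> distributed M lborel Y (normal_density \<mu> \<sigma>)))"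

definition gaussian_process :: "'a measure \<Rightarrow> (real \<Rightarrow> 'a \<Rightarrow> real) \<Rightarrow> bool" where
  "gaussian_process M X \<longleftrightarrow>
     (\<forall>F c. finite F \<longrightarrow> F \<subseteq> {0..} \<longrightarrow> gaussian_rv M (\<lambda>\<omega>. \<Sum>t\<in>F. c t * X t \<omega>))"

definition is_sfbm :: "'a measure \<Rightarrow> real \<Rightarrow> (real \<Rightarrow> 'a \<Rightarrow> real) \<Rightarrow> bool" where
  "is_sfbm M K X \<longleftrightarrow>
     (\<forall>t\<ge>0. X t \<in> borel_measurable M) \<and>
     (\<forall>\<omega>\<in>space M. continuous_on {0..} (\<lambda>t. X t \<omega>)) \<and>
     gaussian_process M X \<and>
     (\<forall>t\<ge>0. integral\<^sup>L M (X t) = 0) \<and>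
     (\<forall>t\<ge>0. \<forall>s\<ge>0. integral\<^sup>L M (\<lambda>\<omega>. X t \<omega> * X s \<omega>) = sfbm_cov K t s)"

definition msfbm :: "nat \<Rightarrow> (nat \<Rightarrow> real) \<Rightarrow> (nat \<Rightarrow> real \<Rightarrow> 'a \<Rightarrow> real) \<Rightarrow> real \<Rightarrow> 'a \<Rightarrow> real" where
  "msfbm N a \<xi> t \<omega> = (\<Sum>i\<in>{1..N}. a i * \<xi> i t \<omega>)"

text \<open>Conditional variance of Y given Z for a centered Gaussian pair:
  inf over b of E (Y - b Z)^2.\<close>
definition cond_var :: "'a measure \<Rightarrow> ('a \<Rightarrow> real) \<Rightarrow> ('a \<Rightarrow> real) \<Rightarrow> real" where
  "cond_var M Y Z = (INF b::real. integral\<^sup>L M (\<lambda>\<omega>. (Y \<omega> - b * Z \<omega>)\<^sup>2))"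

end

theory Submission
  imports Defs
begin

text \<open>
  By independence, \<open>E(S(t) - b S(s))\<^sup>2 = \<Sum>\<^sub>i a\<^sub>i\<^sup>2 E(\<xi>\<^sub>i(t) - b \<xi>\<^sub>i(s))\<^sup>2\<close>, so it suffices to show
  \<open>E(\<xi>(t) - b \<xi>(s))\<^sup>2 \<ge> C |t - s|\<^bsup>2K\<^esup>\<close> for a single sfBm \<open>\<xi>\<close> of index \<open>K = H\<^sub>i\<^sub>0\<close>,
  uniformly in \<open>b\<close> and \<open>s, t \<in> [\<epsilon>, T]\<close>. Let \<open>\<Delta> = \<xi>(t + h) + \<xi>(t - h) - 2 \<xi>(t)\<close> with
  \<open>h = k |t - s|\<close> for a small \<open>k > 0\<close>. By Cauchy-Schwarz,
  \<open>E(\<xi>(t) - b \<xi>(s))\<^sup>2 \<ge> Cov(\<xi>(t) - b \<xi>(s), \<Delta>)\<^sup>2 / Var \<Delta>\<close>. In the covariance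
  \<open>s\<^bsup>2K\<^esup> + t\<^bsup>2K\<^esup> - ((s + t)\<^bsup>2K\<^esup> + |t - s|\<^bsup>2K\<^esup>) / 2\<close> only the last term is singular on the
  diagonal: it contributes \<open>-h\<^bsup>2K\<^esup>\<close> to \<open>Cov(\<xi>(t), \<Delta>)\<close>, while every other contribution is a
  second difference of a power away from 0, hence \<open>O(h\<^sup>2)\<close> (or \<open>O(h\<^sup>2 |t - s|\<^bsup>2K-2\<^esup>)\<close>).
  So for small \<open>k\<close> and bounded \<open>b\<close> the covariance with \<open>\<Delta>\<close> has order \<open>h\<^bsup>2K\<^esup>\<close>, while
  \<open>Var \<Delta> = O(h\<^bsup>2K\<^esup>)\<close>. Unbounded \<open>b\<close> are harmless because the minimising
  \<open>b = Cov(\<xi>(t), \<xi>(s)) / Var \<xi>(s)\<close> is bounded on \<open>[\<epsilon>, T]\<close>.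
\<close>

section \<open>Real-variable estimates\<close>

definition power_second_diff :: "real \<Rightarrow> real \<Rightarrow> real \<Rightarrow> real" where
  "power_second_diff p z h = (z + h) powr p + (z - h) powr p - 2 * z powr p"

lemma power_second_diff_mean_value:
  fixes p z h :: real
  assumes "0 < h" "h < z"
  obtains e w where "0 < e" "e < h" "z - e < w" "w < z + e"
    and "power_second_diff p z h = 2 * p * (p - 1) * e * h * w powr (p - 2)"
proof -
  define g where "g y = (z + y) powr p + (z - y) powr p" for y
  have "\<exists>e. 0 < e \<and> e < h \<and> g h - g 0 = (h - 0) * (p * (z + e) powr (p - 1) - p * (z - e) powr (p - 1))"
  proof (rule MVT2[OF \<open>0 < h\<close>])
    fix y assume "0 \<le> y" "y \<le> h"
    then have "0 < z - y" "0 < z + y" using assms by linarith+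
    then show "(g has_real_derivative p * (z + y) powr (p - 1) - p * (z - y) powr (p - 1)) (at y)"
      unfolding g_def by (auto intro!: derivative_eq_intros)
  qed
  then obtain e where e: "0 < e" "e < h"
    and g: "g h - g 0 = h * (p * (z + e) powr (p - 1) - p * (z - e) powr (p - 1))" by auto
  have "z - e < z + e" using e by simp
  then have "\<exists>w. z - e < w \<and> w < z + e \<and> (z + e) powr (p - 1) - (z - e) powr (p - 1)
              = ((z + e) - (z - e)) * ((p - 1) * w powr (p - 1 - 1))"
  proof (rule MVT2)
    fix y assume "z - e \<le> y" "y \<le> z + e"
    then have "0 < y" using e assms by linarith
    then show "((\<lambda>y. y powr (p - 1)) has_real_derivative (p - 1) * y powr (p - 1 - 1)) (at y)"
      by (auto intro!: derivative_eq_intros)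
  qed
  then obtain w where "z - e < w" "w < z + e"
    and w: "(z + e) powr (p - 1) - (z - e) powr (p - 1) = 2 * e * ((p - 1) * w powr (p - 2))" by auto
  moreover have "power_second_diff p z h = h * p * ((z + e) powr (p - 1) - (z - e) powr (p - 1))"
    using g unfolding g_def power_second_diff_def by (simp add: algebra_simps)
  ultimately show ?thesis using that[of e w] e by (simp only: w) (simp add: algebra_simps)
qed

lemma abs_power_second_diff_le:
  fixes p z h l :: real
  assumes p: "0 < p" "p \<le> 2" and h: "0 \<le> h" and l: "0 < l" "l \<le> z - h"
  shows "\<bar>power_second_diff p z h\<bar> \<le> 4 * l powr (p - 2) * h\<^sup>2"
proof (cases "h = 0")
  case True
  then show ?thesis by (simp add: power_second_diff_def)
next
  case False
  then have "0 < h" "h < z" using h l by auto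
  then obtain e w where e: "0 < e" "e < h" and w: "z - e < w" "w < z + e"
    and eq: "power_second_diff p z h = 2 * p * (p - 1) * e * h * w powr (p - 2)"
    by (rule power_second_diff_mean_value)
  have "w powr (p - 2) \<le> l powr (p - 2)"
    using p l e w by (intro powr_mono2') auto
  then have "\<bar>power_second_diff p z h\<bar> \<le> 2 * 2 * 1 * h * h * l powr (p - 2)"
    unfolding eq abs_mult using p e
    by (intro mult_mono) (auto simp: abs_le_iff)
  then show ?thesis by (simp add: power2_eq_square mult_ac)
qed

lemma sq_le_powr_mult_powr:
  fixes x p T :: real
  assumes "0 < x" "x \<le> T" "p \<le> 2"
  shows "x\<^sup>2 \<le> x powr p * T powr (2 - p)"
proof -
  have "x\<^sup>2 = x powr p * x powr (2 - p)"
    using assms by (simp add: powr_add[symmetric] powr_realpow')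
  also have "\<dots> \<le> x powr p * T powr (2 - p)"
    using assms by (intro mult_left_mono powr_mono2) auto
  finally show ?thesis .
qed

lemma half_powr_mult_sq:
  fixes d p :: real
  assumes "0 < d"
  shows "(d / 2) powr (p - 2) * d\<^sup>2 = 2 powr (2 - p) * d powr p"
proof -
  have "(d / 2) powr (p - 2) * d\<^sup>2 = d powr (p - 2) * d powr 2 * 2 powr (2 - p)"
    using assms by (simp add: powr_divide powr_realpow' powr_minus_divide[symmetric] powr_diff)
  also have "\<dots> = 2 powr (2 - p) * d powr p"
    by (simp add: powr_add[symmetric])
  finally show ?thesis .
qed

lemma exists_small_powr_mult_le:
  fixes a q W :: real
  assumes "0 < a" "0 < q" "0 \<le> W"
  obtains k where "0 < k" "k \<le> a" "k powr q * W \<le> 1 / 2"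
proof
  define k where "k = min a ((1 / (2 * W + 1)) powr (1 / q))"
  show "0 < k" "k \<le> a" using assms by (auto simp: k_def)
  have "k powr q \<le> ((1 / (2 * W + 1)) powr (1 / q)) powr q"
    using assms \<open>0 < k\<close> by (intro powr_mono2) (auto simp: k_def)
  also have "\<dots> = 1 / (2 * W + 1)"
    using assms by (simp add: powr_powr)
  finally have "k powr q * W \<le> W / (2 * W + 1)"
    using assms by (metis mult_right_mono times_divide_eq_left mult_1)
  also have "\<dots> \<le> 1 / 2"
    using assms by (simp add: field_simps)
  finally show "k powr q * W \<le> 1 / 2" .
qed

lemma sq_div_le_of_quadratic_nonneg:
  fixes Q m V W :: real
  assumes nonneg: "\<And>l. 0 \<le> Q - 2 * l * m + l\<^sup>2 * V" and "V \<le> W" "0 < W"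
  shows "m\<^sup>2 / W \<le> Q"
proof -
  have "0 \<le> Q - 2 * (m / W) * m + (m / W)\<^sup>2 * V" by (rule nonneg)
  also have "\<dots> \<le> Q - 2 * (m / W) * m + (m / W)\<^sup>2 * W"
    using assms by (intro add_left_mono mult_left_mono) auto
  also have "\<dots> = Q - m\<^sup>2 / W"
    using \<open>0 < W\<close> by (simp add: field_simps power2_eq_square)
  finally show ?thesis by simp
qed

lemma quadratic_argmin_le:
  fixes u r v b :: real
  assumes "0 < v"
  shows "u - 2 * (r / v) * r + (r / v)\<^sup>2 * v \<le> u - 2 * b * r + b\<^sup>2 * v"
proof -
  have "u - 2 * b * r + b\<^sup>2 * v - (u - 2 * (r / v) * r + (r / v)\<^sup>2 * v) = v * (b - r / v)\<^sup>2"
    using assms by (simp add: field_simps power2_eq_square)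
  also have "\<dots> \<ge> 0" using assms by simp
  finally show ?thesis by simp
qed

section \<open>The covariance of sub-fractional Brownian motion\<close>

lemma sfbm_cov_commute: "sfbm_cov K x y = sfbm_cov K y x"
  unfolding sfbm_cov_def by (simp add: add.commute abs_minus_commute)

lemma sfbm_cov_diag:
  assumes "0 < x"
  shows "sfbm_cov K x x = (2 - 2 powr (2 * K - 1)) * x powr (2 * K)"
proof -
  have "(2 * x) powr (2 * K) = 2 * 2 powr (2 * K - 1) * x powr (2 * K)"
    using assms by (simp add: powr_mult powr_diff)
  then show ?thesis unfolding sfbm_cov_def by (simp add: algebra_simps)
qed

lemma sfbm_cov_diag_pos_factor:
  fixes K :: real
  assumes "K < 1"
  shows "0 < 2 - 2 powr (2 * K - 1)"
proof -
  have "2 powr (2 * K - 1) < (2::real) powr 1"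
    using assms by (intro powr_less_mono) auto
  then show ?thesis by simp
qed

lemma abs_sfbm_cov_le:
  fixes K x y T :: real
  assumes "0 \<le> K" "0 \<le> x" "x \<le> T" "0 \<le> y" "y \<le> T"
  shows "\<bar>sfbm_cov K x y\<bar> \<le> 2 * (2 * T) powr (2 * K)"
proof -
  have "x powr (2 * K) \<le> (2 * T) powr (2 * K)" "y powr (2 * K) \<le> (2 * T) powr (2 * K)"
    "(y + x) powr (2 * K) \<le> (2 * T) powr (2 * K)" "\<bar>x - y\<bar> powr (2 * K) \<le> (2 * T) powr (2 * K)"
    using assms by (auto intro!: powr_mono2)
  moreover have "0 \<le> x powr (2 * K)" "0 \<le> y powr (2 * K)"
    "0 \<le> (y + x) powr (2 * K)" "0 \<le> \<bar>x - y\<bar> powr (2 * K)" by simp_all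
  ultimately show ?thesis
    unfolding sfbm_cov_def abs_le_iff by argo
qed

text \<open>
  For a process \<open>X\<close> with covariance \<open>R\<close>: the covariance of \<open>X u\<close> with the second difference
  \<open>X (t + h) + X (t - h) - 2 X t\<close>, and the variance of that second difference.
\<close>

definition cov_second_diff :: "(real \<Rightarrow> real \<Rightarrow> real) \<Rightarrow> real \<Rightarrow> real \<Rightarrow> real \<Rightarrow> real" where
  "cov_second_diff R u t h = R u (t + h) + R u (t - h) - 2 * R u t"

definition var_second_diff :: "(real \<Rightarrow> real \<Rightarrow> real) \<Rightarrow> real \<Rightarrow> real \<Rightarrow> real" where
  "var_second_diff R t h = R (t + h) (t + h) + R (t - h) (t - h) + 4 * R t t
     + 2 * R (t + h) (t - h) - 4 * R (t + h) t - 4 * R (t - h) t"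

lemma cov_second_diff_sfbm_cov_self:
  assumes "0 \<le> h"
  shows "cov_second_diff (sfbm_cov K) t t h
    = power_second_diff (2 * K) t h - power_second_diff (2 * K) (2 * t) h / 2 - h powr (2 * K)"
  using assms unfolding cov_second_diff_def sfbm_cov_def power_second_diff_def
  by (simp add: field_simps)

lemma cov_second_diff_sfbm_cov:
  assumes "0 \<le> h" "h \<le> \<bar>t - s\<bar>"
  shows "cov_second_diff (sfbm_cov K) s t h
    = power_second_diff (2 * K) t h - power_second_diff (2 * K) (s + t) h / 2
      - power_second_diff (2 * K) \<bar>t - s\<bar> h / 2"
proof -
  have "\<bar>s - (t + h)\<bar> powr (2 * K) + \<bar>s - (t - h)\<bar> powr (2 * K)
      = (\<bar>t - s\<bar> + h) powr (2 * K) + (\<bar>t - s\<bar> - h) powr (2 * K)"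
  proof (cases "s \<le> t")
    case True
    then have "\<bar>s - (t + h)\<bar> = \<bar>t - s\<bar> + h" "\<bar>s - (t - h)\<bar> = \<bar>t - s\<bar> - h"
      using assms by auto
    then show ?thesis by simp
  next
    case False
    then have "\<bar>s - (t + h)\<bar> = \<bar>t - s\<bar> - h" "\<bar>s - (t - h)\<bar> = \<bar>t - s\<bar> + h"
      using assms by auto
    then show ?thesis by simp
  qed
  then show ?thesis
    unfolding cov_second_diff_def sfbm_cov_def power_second_diff_def
    by (simp add: field_simps abs_minus_commute[of s t])
qed

lemma var_second_diff_sfbm_cov:
  assumes "0 \<le> h"
  shows "var_second_diff (sfbm_cov K) t h
    = (4 - 2 powr (2 * K)) * h powr (2 * K) - power_second_diff (2 * K) (2 * t) (2 * h) / 2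
      + 2 * power_second_diff (2 * K) (2 * t) h"
proof -
  have "(2 * h) powr (2 * K) = 2 powr (2 * K) * h powr (2 * K)"
    using assms by (simp add: powr_mult)
  then show ?thesis
    using assms unfolding var_second_diff_def sfbm_cov_def power_second_diff_def
    by (simp add: field_simps)
qed

lemma abs_cov_second_diff_sfbm_cov_ge:
  fixes K \<epsilon> s t b h B :: real
  assumes K: "0 < K" "K < 1" and st: "\<epsilon> \<le> s" "\<epsilon> \<le> t"
    and h: "0 < h" "h \<le> \<epsilon> / 2" "h \<le> \<bar>t - s\<bar> / 2" and b: "\<bar>b\<bar> \<le> B"
  shows "h powr (2 * K) - 6 * (1 + B) * (\<epsilon> / 2) powr (2 * K - 2) * h\<^sup>2
      - 2 * B * (\<bar>t - s\<bar> / 2) powr (2 * K - 2) * h\<^sup>2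
    \<le> \<bar>cov_second_diff (sfbm_cov K) t t h - b * cov_second_diff (sfbm_cov K) s t h\<bar>"
proof -
  let ?D = "power_second_diff (2 * K)" and ?E = "(\<epsilon> / 2) powr (2 * K - 2)"
    and ?d = "\<bar>t - s\<bar>" and ?F = "(\<bar>t - s\<bar> / 2) powr (2 * K - 2)"
  have \<epsilon>: "0 < \<epsilon> / 2" using h by linarith
  have bt: "\<bar>?D t h\<bar> \<le> 4 * ?E * h\<^sup>2"
    by (rule abs_power_second_diff_le) (use K st h \<epsilon> in auto)
  have b2t: "\<bar>?D (2 * t) h\<bar> \<le> 4 * ?E * h\<^sup>2"
    by (rule abs_power_second_diff_le) (use K st h \<epsilon> in auto)
  have bst: "\<bar>?D (s + t) h\<bar> \<le> 4 * ?E * h\<^sup>2"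
    by (rule abs_power_second_diff_le) (use K st h \<epsilon> in auto)
  have bd: "\<bar>?D ?d h\<bar> \<le> 4 * ?F * h\<^sup>2"
    by (rule abs_power_second_diff_le) (use K h in auto)
  have first: "\<bar>?D t h - ?D (2 * t) h / 2\<bar> \<le> 6 * ?E * h\<^sup>2"
    using bt b2t by (simp add: abs_le_iff)
  have "\<bar>?D t h - ?D (s + t) h / 2 - ?D ?d h / 2\<bar> \<le> 6 * ?E * h\<^sup>2 + 2 * ?F * h\<^sup>2"
    using bt bst bd by (simp add: abs_le_iff)
  then have second: "\<bar>b * (?D t h - ?D (s + t) h / 2 - ?D ?d h / 2)\<bar> \<le> B * (6 * ?E * h\<^sup>2 + 2 * ?F * h\<^sup>2)"
    unfolding abs_mult using b by (intro mult_mono) auto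
  have "cov_second_diff (sfbm_cov K) t t h - b * cov_second_diff (sfbm_cov K) s t h
    = (?D t h - ?D (2 * t) h / 2) - h powr (2 * K) - b * (?D t h - ?D (s + t) h / 2 - ?D ?d h / 2)"
    using h by (simp add: cov_second_diff_sfbm_cov_self cov_second_diff_sfbm_cov)
  with first second show ?thesis
    by (simp add: abs_le_iff algebra_simps) linarith
qed

lemma var_second_diff_sfbm_cov_le:
  fixes K \<epsilon> t h :: real
  assumes K: "0 < K" "K < 1" and t: "\<epsilon> \<le> t" and h: "0 < h" "h \<le> \<epsilon> / 2"
  shows "var_second_diff (sfbm_cov K) t h \<le> 4 * h powr (2 * K) + 16 * (\<epsilon> / 2) powr (2 * K - 2) * h\<^sup>2"
proof -
  let ?D = "power_second_diff (2 * K)" and ?E = "(\<epsilon> / 2) powr (2 * K - 2)"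
  have \<epsilon>: "0 < \<epsilon> / 2" using h by linarith
  have "\<bar>?D (2 * t) (2 * h)\<bar> \<le> 4 * ?E * (2 * h)\<^sup>2"
    by (rule abs_power_second_diff_le) (use K t h \<epsilon> in auto)
  then have "\<bar>?D (2 * t) (2 * h)\<bar> \<le> 16 * ?E * h\<^sup>2"
    by (simp add: power_mult_distrib)
  moreover have "\<bar>?D (2 * t) h\<bar> \<le> 4 * ?E * h\<^sup>2"
    by (rule abs_power_second_diff_le) (use K t h \<epsilon> in auto)
  moreover have "(4 - 2 powr (2 * K)) * h powr (2 * K) \<le> 4 * h powr (2 * K)"
    by (simp add: algebra_simps)
  ultimately show ?thesis
    unfolding var_second_diff_sfbm_cov[OF less_imp_le[OF h(1)]] abs_le_iff by linarith
qed

lemma abs_cov_second_diff_sfbm_cov_ge_scaled: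
  fixes K \<epsilon> T B k s t b :: real
  defines "W \<equiv> 6 * (1 + B) * (\<epsilon> / 2) powr (2 * K - 2) * T powr (2 - 2 * K) + 2 * B * 2 powr (2 - 2 * K)"
  assumes K: "0 < K" "K < 1" and \<epsilon>: "0 < \<epsilon>" and s: "s \<in> {\<epsilon>..T}" and t: "t \<in> {\<epsilon>..T}"
    and "s \<noteq> t" and b: "\<bar>b\<bar> \<le> B"
    and k: "0 < k" "k \<le> 1 / 2" "k \<le> \<epsilon> / (2 * T)" "k powr (2 - 2 * K) * W \<le> 1 / 2"
  shows "k powr (2 * K) * \<bar>t - s\<bar> powr (2 * K) / 2
    \<le> \<bar>cov_second_diff (sfbm_cov K) t t (k * \<bar>t - s\<bar>) - b * cov_second_diff (sfbm_cov K) s t (k * \<bar>t - s\<bar>)\<bar>"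
proof -
  define p where "p = 2 * K"
  define d where "d = \<bar>t - s\<bar>"
  define h where "h = k * d"
  define E where "E = (\<epsilon> / 2) powr (p - 2)"
  have d: "0 < d" "d \<le> T" using \<open>s \<noteq> t\<close> s t \<epsilon> by (auto simp: d_def)
  have h: "0 < h" "h \<le> d / 2" "h \<le> \<epsilon> / 2"
    using k d \<epsilon> mult_right_mono[of k "1 / 2" d] mult_mono[of k "\<epsilon> / (2 * T)" d T]
    by (auto simp: h_def)
  have "6 * (1 + B) * E * h\<^sup>2 + 2 * B * ((d / 2) powr (p - 2) * h\<^sup>2) \<le> k\<^sup>2 * d powr p * W"
  proof -
    have "h\<^sup>2 \<le> k\<^sup>2 * (d powr p * T powr (2 - p))"
      using sq_le_powr_mult_powr[of d T p] d K k by (simp add: h_def p_def power_mult_distrib)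
    then have "6 * (1 + B) * E * h\<^sup>2 \<le> 6 * (1 + B) * E * (k\<^sup>2 * (d powr p * T powr (2 - p)))"
      using b by (intro mult_left_mono) (auto simp: E_def)
    moreover have "(d / 2) powr (p - 2) * h\<^sup>2 = k\<^sup>2 * (2 powr (2 - p) * d powr p)"
      using half_powr_mult_sq[OF d(1)] by (simp add: h_def power_mult_distrib algebra_simps)
    ultimately show ?thesis
      unfolding W_def E_def p_def by (simp add: algebra_simps)
  qed
  also have "\<dots> = k powr p * d powr p * (k powr (2 - p) * W)"
  proof -
    have "k\<^sup>2 = k powr p * k powr (2 - p)"
      using k(1) by (simp add: powr_add[symmetric] powr_realpow')
    then show ?thesis by (simp add: mult_ac)
  qed
  also have "\<dots> \<le> k powr p * d powr p * (1 / 2)"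
    using k(4) by (intro mult_left_mono) (auto simp: p_def)
  finally have err: "6 * (1 + B) * E * h\<^sup>2 + 2 * B * ((d / 2) powr (p - 2) * h\<^sup>2)
    \<le> k powr p * d powr p * (1 / 2)" .
  have "\<epsilon> \<le> s" "\<epsilon> \<le> t" using s t by auto
  from abs_cov_second_diff_sfbm_cov_ge[OF K this h(1) h(3) h(2)[unfolded d_def] b]
  have "h powr p - 6 * (1 + B) * E * h\<^sup>2 - 2 * B * ((d / 2) powr (p - 2) * h\<^sup>2)
    \<le> \<bar>cov_second_diff (sfbm_cov K) t t h - b * cov_second_diff (sfbm_cov K) s t h\<bar>"
    unfolding d_def p_def E_def by (simp only: mult.assoc)
  moreover have "h powr p = k powr p * d powr p" using k d by (simp add: h_def powr_mult)
  ultimately show ?thesis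
    using err unfolding h_def d_def p_def by linarith
qed

definition psd_kernel_on :: "real set \<Rightarrow> (real \<Rightarrow> real \<Rightarrow> real) \<Rightarrow> bool" where
  "psd_kernel_on S R \<longleftrightarrow>
     (\<forall>(n::nat) x c. (\<forall>j<n. x j \<in> S) \<longrightarrow> 0 \<le> (\<Sum>j<n. \<Sum>k<n. c j * c k * R (x j) (x k)))"

lemma psd_kernel_on_second_diff_form:
  assumes psd: "psd_kernel_on S R" and sym: "\<And>x y. R x y = R y x"
    and S: "t \<in> S" "s \<in> S" "t + h \<in> S" "t - h \<in> S"
  shows "0 \<le> (R t t - 2 * b * R t s + b\<^sup>2 * R s s)
    - 2 * l * (cov_second_diff R t t h - b * cov_second_diff R s t h) + l\<^sup>2 * var_second_diff R t h"
proof -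
  define x where "x j = [t, s, t + h, t - h] ! j" for j
  \<comment> \<open>the coefficients of \<open>(X t - b X s) - l (X (t + h) + X (t - h) - 2 X t)\<close>\<close>
  define c where "c j = [1 + 2 * l, - b, - l, - l] ! j" for j
  have "\<forall>j<4. x j \<in> S"
    using S by (auto simp: x_def less_Suc_eq numeral_eq_Suc)
  then have "0 \<le> (\<Sum>j<4. \<Sum>k<4. c j * c k * R (x j) (x k))"
    using psd unfolding psd_kernel_on_def by blast
  also have "\<dots> = (R t t - 2 * b * R t s + b\<^sup>2 * R s s)
    - 2 * l * (cov_second_diff R t t h - b * cov_second_diff R s t h) + l\<^sup>2 * var_second_diff R t h"
    unfolding x_def c_def cov_second_diff_def var_second_diff_def
    by (simp add: eval_nat_numeral sym[of s t] sym[of "t + h" t] sym[of "t - h" t] sym[of "t + h" s]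
        sym[of "t - h" s] sym[of "t - h" "t + h"] sym[of "h + t" t] sym[of "h + t" s] sym[of "t - h" "h + t"]
        power2_eq_square algebra_simps)
  finally show ?thesis .
qed

lemma sfbm_cov_form_ge_cov_second_diff_sq:
  fixes K \<epsilon> T s t h b :: real
  assumes K: "0 < K" "K < 1" and psd: "psd_kernel_on {0<..} (sfbm_cov K)"
    and s: "0 < s" and t: "\<epsilon> \<le> t" and h: "0 < h" "h \<le> \<epsilon> / 2" "h \<le> T"
  shows "(cov_second_diff (sfbm_cov K) t t h - b * cov_second_diff (sfbm_cov K) s t h)\<^sup>2
      / ((4 + 16 * (\<epsilon> / 2) powr (2 * K - 2) * T powr (2 - 2 * K)) * h powr (2 * K))
    \<le> sfbm_cov K t t - 2 * b * sfbm_cov K t s + b\<^sup>2 * sfbm_cov K s s"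
proof (rule sq_div_le_of_quadratic_nonneg)
  show "0 \<le> sfbm_cov K t t - 2 * b * sfbm_cov K t s + b\<^sup>2 * sfbm_cov K s s
      - 2 * l * (cov_second_diff (sfbm_cov K) t t h - b * cov_second_diff (sfbm_cov K) s t h)
      + l\<^sup>2 * var_second_diff (sfbm_cov K) t h" for l
    using psd s t h by (intro psd_kernel_on_second_diff_form) (auto simp: sfbm_cov_commute)
  define E where "E = (\<epsilon> / 2) powr (2 * K - 2)"
  have "h\<^sup>2 \<le> h powr (2 * K) * T powr (2 - 2 * K)"
    using h K by (intro sq_le_powr_mult_powr) auto
  then have "16 * E * h\<^sup>2 \<le> 16 * E * (h powr (2 * K) * T powr (2 - 2 * K))"
    by (intro mult_left_mono) (auto simp: E_def)
  moreover have "var_second_diff (sfbm_cov K) t h \<le> 4 * h powr (2 * K) + 16 * E * h\<^sup>2"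
    unfolding E_def by (rule var_second_diff_sfbm_cov_le) (use K t h in auto)
  ultimately show "var_second_diff (sfbm_cov K) t h
      \<le> (4 + 16 * (\<epsilon> / 2) powr (2 * K - 2) * T powr (2 - 2 * K)) * h powr (2 * K)"
    unfolding E_def by (simp add: algebra_simps)
  show "0 < (4 + 16 * (\<epsilon> / 2) powr (2 * K - 2) * T powr (2 - 2 * K)) * h powr (2 * K)"
    using h by (intro mult_pos_pos add_pos_nonneg) auto
qed

lemma sfbm_cov_form_ge_bounded:
  fixes K \<epsilon> T B :: real
  assumes K: "0 < K" "K < 1" and psd: "psd_kernel_on {0<..} (sfbm_cov K)"
    and \<epsilon>: "0 < \<epsilon>" "\<epsilon> < T" and B: "0 \<le> B"
  shows "\<exists>C>0. \<forall>s\<in>{\<epsilon>..T}. \<forall>t\<in>{\<epsilon>..T}. \<forall>b. \<bar>b\<bar> \<le> B \<longrightarrow>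
           C * \<bar>s - t\<bar> powr (2 * K)
             \<le> sfbm_cov K t t - 2 * b * sfbm_cov K t s + b\<^sup>2 * sfbm_cov K s s"
proof -
  define p where "p = 2 * K"
  define E where "E = (\<epsilon> / 2) powr (p - 2)"
  define W where "W = 6 * (1 + B) * E * T powr (2 - p) + 2 * B * 2 powr (2 - p)"
  have "0 \<le> W" unfolding W_def E_def using B by (intro add_nonneg_nonneg mult_nonneg_nonneg) auto
  moreover have "0 < min (1 / 2) (\<epsilon> / (2 * T))" "0 < 2 - p" using \<epsilon> K by (auto simp: p_def)
  ultimately obtain k where k: "0 < k" "k \<le> min (1 / 2) (\<epsilon> / (2 * T))" "k powr (2 - p) * W \<le> 1 / 2"
    by (metis exists_small_powr_mult_le)
  have k_le: "k \<le> 1 / 2" "k \<le> \<epsilon> / (2 * T)" using k(2) by auto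
  define Cv where "Cv = 4 + 16 * E * T powr (2 - p)"
  have Cv: "0 < Cv" unfolding Cv_def E_def by (intro add_pos_nonneg mult_nonneg_nonneg) auto
  have "k powr p / (4 * Cv) * \<bar>t - s\<bar> powr p
          \<le> sfbm_cov K t t - 2 * b * sfbm_cov K t s + b\<^sup>2 * sfbm_cov K s s"
    if s: "s \<in> {\<epsilon>..T}" and t: "t \<in> {\<epsilon>..T}" and b: "\<bar>b\<bar> \<le> B" for s t b
  proof (cases "s = t")
    case True
    have "0 \<le> (2 - 2 powr (2 * K - 1)) * t powr (2 * K) * (1 - b)\<^sup>2"
      using sfbm_cov_diag_pos_factor[OF K(2)] by simp
    with True t \<epsilon> show ?thesis
      by (simp add: sfbm_cov_diag power2_eq_square algebra_simps)
  next
    case False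
    define h where "h = k * \<bar>t - s\<bar>"
    define m where "m = cov_second_diff (sfbm_cov K) t t h - b * cov_second_diff (sfbm_cov K) s t h"
    have "\<bar>t - s\<bar> \<le> T" using s t \<epsilon> by auto
    then have h: "0 < h" "h \<le> \<epsilon> / 2" "h \<le> T"
      using k(1) k_le False \<epsilon> mult_mono[of k "\<epsilon> / (2 * T)" "\<bar>t - s\<bar>" T] by (auto simp: h_def)
    have "k powr p * \<bar>t - s\<bar> powr p / 2 \<le> \<bar>m\<bar>"
      unfolding m_def h_def p_def using K \<epsilon> s t False b k k_le
      by (intro abs_cov_second_diff_sfbm_cov_ge_scaled) (auto simp: W_def E_def p_def)
    then have sq: "(k powr p * \<bar>t - s\<bar> powr p / 2)\<^sup>2 \<le> m\<^sup>2"
      using power_mono[of _ "\<bar>m\<bar>" 2] by simp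
    have cs: "m\<^sup>2 / (Cv * h powr p)
        \<le> sfbm_cov K t t - 2 * b * sfbm_cov K t s + b\<^sup>2 * sfbm_cov K s s"
      unfolding m_def Cv_def E_def p_def using K psd s t h \<epsilon>
      by (intro sfbm_cov_form_ge_cov_second_diff_sq) auto
    have "k powr p / (4 * Cv) * \<bar>t - s\<bar> powr p = (k powr p * \<bar>t - s\<bar> powr p / 2)\<^sup>2 / (Cv * h powr p)"
      using Cv k False by (simp add: h_def powr_mult field_simps power2_eq_square)
    also have "\<dots> \<le> m\<^sup>2 / (Cv * h powr p)"
      using sq Cv h by (intro divide_right_mono) auto
    finally show ?thesis
      using cs by simp
  qed
  moreover have "0 < k powr p / (4 * Cv)" using k Cv by simp
  ultimately show ?thesis unfolding p_def by (metis abs_minus_commute)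
qed

lemma sfbm_cov_form_ge:
  fixes K \<epsilon> T :: real
  assumes K: "0 < K" "K < 1" and psd: "psd_kernel_on {0<..} (sfbm_cov K)"
    and \<epsilon>: "0 < \<epsilon>" "\<epsilon> < T"
  shows "\<exists>C>0. \<forall>s\<in>{\<epsilon>..T}. \<forall>t\<in>{\<epsilon>..T}. \<forall>b.
           C * \<bar>s - t\<bar> powr (2 * K)
             \<le> sfbm_cov K t t - 2 * b * sfbm_cov K t s + b\<^sup>2 * sfbm_cov K s s"
proof -
  define \<sigma> where "\<sigma> = (2 - 2 powr (2 * K - 1)) * \<epsilon> powr (2 * K)"
  have \<sigma>: "0 < \<sigma>" using sfbm_cov_diag_pos_factor[OF K(2)] \<epsilon> by (simp add: \<sigma>_def)
  have diag: "\<sigma> \<le> sfbm_cov K s s" if "s \<in> {\<epsilon>..T}" for s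
    using that \<epsilon> K sfbm_cov_diag_pos_factor[OF K(2)]
    by (auto simp: \<sigma>_def sfbm_cov_diag intro!: mult_left_mono powr_mono2)
  define B where "B = 2 * (2 * T) powr (2 * K) / \<sigma>"
  have "0 \<le> B" using \<sigma> by (simp add: B_def)
  then obtain C where C: "0 < C" and bounded: "\<forall>s\<in>{\<epsilon>..T}. \<forall>t\<in>{\<epsilon>..T}. \<forall>b. \<bar>b\<bar> \<le> B \<longrightarrow>
      C * \<bar>s - t\<bar> powr (2 * K) \<le> sfbm_cov K t t - 2 * b * sfbm_cov K t s + b\<^sup>2 * sfbm_cov K s s"
    using sfbm_cov_form_ge_bounded[OF K psd \<epsilon>] by blast
  have "C * \<bar>s - t\<bar> powr (2 * K) \<le> sfbm_cov K t t - 2 * b * sfbm_cov K t s + b\<^sup>2 * sfbm_cov K s s"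
    if s: "s \<in> {\<epsilon>..T}" and t: "t \<in> {\<epsilon>..T}" for s t b
  proof -
    define b0 where "b0 = sfbm_cov K t s / sfbm_cov K s s"
    have "\<bar>sfbm_cov K t s\<bar> \<le> 2 * (2 * T) powr (2 * K)"
      using s t \<epsilon> K by (intro abs_sfbm_cov_le) auto
    then have "\<bar>b0\<bar> \<le> B"
      unfolding b0_def B_def abs_divide using diag[OF s] \<sigma> by (intro frac_le) auto
    then have "C * \<bar>s - t\<bar> powr (2 * K)
        \<le> sfbm_cov K t t - 2 * b0 * sfbm_cov K t s + b0\<^sup>2 * sfbm_cov K s s"
      using bounded s t by blast
    also have "\<dots> \<le> sfbm_cov K t t - 2 * b * sfbm_cov K t s + b\<^sup>2 * sfbm_cov K s s"
      unfolding b0_def using diag[OF s] \<sigma> by (intro quadratic_argmin_le) auto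
    finally show ?thesis .
  qed
  with C show ?thesis by blast
qed

section \<open>Second moments\<close>

lemma integrable_mult_of_square_integrable:
  fixes f g :: "'a \<Rightarrow> real"
  assumes "f \<in> borel_measurable M" "g \<in> borel_measurable M"
    and "integrable M (\<lambda>x. (f x)\<^sup>2)" "integrable M (\<lambda>x. (g x)\<^sup>2)"
  shows "integrable M (\<lambda>x. f x * g x)"
proof (rule Bochner_Integration.integrable_bound)
  show "integrable M (\<lambda>x. (f x)\<^sup>2 + (g x)\<^sup>2)" using assms by auto
  show "(\<lambda>x. f x * g x) \<in> borel_measurable M" using assms by auto
  have "\<bar>f x * g x\<bar> \<le> (f x)\<^sup>2 + (g x)\<^sup>2" for x
  proof -
    have "0 \<le> \<bar>f x\<bar> * \<bar>g x\<bar>" by simp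
    with sum_squares_bound[of "\<bar>f x\<bar>" "\<bar>g x\<bar>"] show ?thesis
      unfolding abs_mult power2_abs by linarith
  qed
  then show "AE x in M. norm (f x * g x) \<le> norm ((f x)\<^sup>2 + (g x)\<^sup>2)"
    by simp
qed

lemma integral_square_sum:
  fixes F :: "'i \<Rightarrow> 'a \<Rightarrow> real"
  assumes "\<And>j. j \<in> J \<Longrightarrow> F j \<in> borel_measurable M"
    and "\<And>j. j \<in> J \<Longrightarrow> integrable M (\<lambda>x. (F j x)\<^sup>2)"
  shows "(\<integral>x. (\<Sum>j\<in>J. c j * F j x)\<^sup>2 \<partial>M)
    = (\<Sum>j\<in>J. \<Sum>k\<in>J. c j * c k * (\<integral>x. F j x * F k x \<partial>M))"
proof -
  have "(\<lambda>x. (\<Sum>j\<in>J. c j * F j x)\<^sup>2) = (\<lambda>x. \<Sum>j\<in>J. \<Sum>k\<in>J. c j * c k * (F j x * F k x))"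
    by (simp add: power2_eq_square sum_product algebra_simps)
  moreover have "integrable M (\<lambda>x. F j x * F k x)" if "j \<in> J" "k \<in> J" for j k
    using that assms by (intro integrable_mult_of_square_integrable) auto
  ultimately show ?thesis by simp
qed

lemma
  fixes f g :: "'a \<Rightarrow> real"
  assumes "f \<in> borel_measurable M" "g \<in> borel_measurable M"
    and "integrable M (\<lambda>x. (f x)\<^sup>2)" "integrable M (\<lambda>x. (g x)\<^sup>2)"
  shows integrable_square_diff_mult: "integrable M (\<lambda>x. (f x - b * g x)\<^sup>2)"
    and integral_square_diff_mult: "(\<integral>x. (f x - b * g x)\<^sup>2 \<partial>M)
      = (\<integral>x. (f x)\<^sup>2 \<partial>M) - 2 * b * (\<integral>x. f x * g x \<partial>M) + b\<^sup>2 * (\<integral>x. (g x)\<^sup>2 \<partial>M)"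
proof -
  have eq: "(\<lambda>x. (f x - b * g x)\<^sup>2) = (\<lambda>x. (f x)\<^sup>2 - 2 * b * (f x * g x) + b\<^sup>2 * (g x)\<^sup>2)"
    by (simp add: power2_eq_square algebra_simps)
  have "integrable M (\<lambda>x. f x * g x)"
    using assms by (rule integrable_mult_of_square_integrable)
  with assms show "integrable M (\<lambda>x. (f x - b * g x)\<^sup>2)"
    and "(\<integral>x. (f x - b * g x)\<^sup>2 \<partial>M)
      = (\<integral>x. (f x)\<^sup>2 \<partial>M) - 2 * b * (\<integral>x. f x * g x \<partial>M) + b\<^sup>2 * (\<integral>x. (g x)\<^sup>2 \<partial>M)"
    unfolding eq by simp_all
qed

lemma (in prob_space) integral_square_sum_indep_centered:
  fixes G :: "'i \<Rightarrow> 'a \<Rightarrow> real"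
  assumes "finite J" and indep: "indep_vars (\<lambda>_. borel) G J"
    and sq: "\<And>i. i \<in> J \<Longrightarrow> integrable M (\<lambda>x. (G i x)\<^sup>2)"
    and centered: "\<And>i. i \<in> J \<Longrightarrow> expectation (G i) = 0"
  shows "expectation (\<lambda>x. (\<Sum>i\<in>J. a i * G i x)\<^sup>2) = (\<Sum>i\<in>J. (a i)\<^sup>2 * expectation (\<lambda>x. (G i x)\<^sup>2))"
proof -
  have meas: "G i \<in> borel_measurable M" if "i \<in> J" for i
    using indep that unfolding indep_vars_def by auto
  have int: "integrable M (G i)" if "i \<in> J" for i
    using meas[OF that] sq[OF that] by (rule square_integrable_imp_integrable)
  have uncorrelated: "expectation (\<lambda>x. G i x * G j x) = 0" if "i \<in> J" "j \<in> J" "i \<noteq> j" for i j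
  proof -
    have "indep_vars (\<lambda>_. borel) G {i, j}"
      using that by (intro indep_vars_subset[OF indep]) auto
    then have "expectation (\<lambda>x. \<Prod>k\<in>{i, j}. G k x) = (\<Prod>k\<in>{i, j}. expectation (G k))"
      by (rule indep_vars_lebesgue_integral[rotated]) (use int that in auto)
    then show ?thesis using that centered by simp
  qed
  have "(\<Sum>k\<in>J. a i * a k * expectation (\<lambda>x. G i x * G k x))
      = (a i)\<^sup>2 * expectation (\<lambda>x. (G i x)\<^sup>2)" if "i \<in> J" for i
    using that \<open>finite J\<close>
    by (subst sum.remove[of J i]) (auto simp: power2_eq_square intro!: sum.neutral dest: uncorrelated[of i])
  then show ?thesis
    using meas sq by (simp add: integral_square_sum)
qed

section \<open>Sub-fractional Brownian motion and its mixtures\<close>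

lemma sfbm_square_integrable:
  assumes "is_sfbm M K X" "0 < K" "K < 1" "0 < t"
  shows "integrable M (\<lambda>x. (X t x)\<^sup>2)"
proof -
  have "(\<integral>x. (X t x)\<^sup>2 \<partial>M) = sfbm_cov K t t"
    using assms unfolding is_sfbm_def by (simp add: power2_eq_square)
  also have "\<dots> > 0"
    using assms sfbm_cov_diag_pos_factor[of K] by (simp add: sfbm_cov_diag)
  \<comment> \<open>a non-integrable function has Bochner integral 0\<close>
  finally show ?thesis
    using not_integrable_integral_eq by fastforce
qed

lemma sfbm_cov_psd_kernel:
  assumes X: "is_sfbm M K X" and K: "0 < K" "K < 1"
  shows "psd_kernel_on {0<..} (sfbm_cov K)"
  unfolding psd_kernel_on_def
proof (intro allI impI)
  fix n :: nat and x c :: "nat \<Rightarrow> real"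
  assume x: "\<forall>j<n. x j \<in> {0<..}"
  have "(\<Sum>j<n. \<Sum>k<n. c j * c k * sfbm_cov K (x j) (x k))
      = (\<Sum>j<n. \<Sum>k<n. c j * c k * (\<integral>\<omega>. X (x j) \<omega> * X (x k) \<omega> \<partial>M))"
    using X x unfolding is_sfbm_def by (intro sum.cong refl) (auto simp: less_imp_le)
  also have "\<dots> = (\<integral>\<omega>. (\<Sum>j<n. c j * X (x j) \<omega>)\<^sup>2 \<partial>M)"
    using X x K unfolding is_sfbm_def
    by (intro integral_square_sum[symmetric] sfbm_square_integrable[OF X K]) auto
  also have "\<dots> \<ge> 0" by simp
  finally show "0 \<le> (\<Sum>j<n. \<Sum>k<n. c j * c k * sfbm_cov K (x j) (x k))" .
qed

lemma sfbm_local_nondeterminism: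
  fixes K \<epsilon> T :: real
  assumes X: "is_sfbm M K X" and K: "0 < K" "K < 1" and \<epsilon>: "0 < \<epsilon>" "\<epsilon> < T"
  shows "\<exists>C>0. \<forall>s\<in>{\<epsilon>..T}. \<forall>t\<in>{\<epsilon>..T}. \<forall>b.
           C * \<bar>s - t\<bar> powr (2 * K) \<le> (\<integral>\<omega>. (X t \<omega> - b * X s \<omega>)\<^sup>2 \<partial>M)"
proof -
  obtain C where "0 < C" and C: "\<forall>s\<in>{\<epsilon>..T}. \<forall>t\<in>{\<epsilon>..T}. \<forall>b. C * \<bar>s - t\<bar> powr (2 * K)
      \<le> sfbm_cov K t t - 2 * b * sfbm_cov K t s + b\<^sup>2 * sfbm_cov K s s"
    using sfbm_cov_form_ge[OF K sfbm_cov_psd_kernel[OF X K] \<epsilon>] by blast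
  have meas: "X u \<in> borel_measurable M" and cov: "(\<integral>\<omega>. X u \<omega> * X v \<omega> \<partial>M) = sfbm_cov K u v"
    if "0 \<le> u" "0 \<le> v" for u v
    using X that unfolding is_sfbm_def by auto
  have "(\<integral>\<omega>. (X t \<omega> - b * X s \<omega>)\<^sup>2 \<partial>M)
      = sfbm_cov K t t - 2 * b * sfbm_cov K t s + b\<^sup>2 * sfbm_cov K s s"
    if "0 < s" "0 < t" for s t b
  proof -
    have "(\<integral>\<omega>. (X t \<omega> - b * X s \<omega>)\<^sup>2 \<partial>M) = (\<integral>\<omega>. (X t \<omega>)\<^sup>2 \<partial>M)
        - 2 * b * (\<integral>\<omega>. X t \<omega> * X s \<omega> \<partial>M) + b\<^sup>2 * (\<integral>\<omega>. (X s \<omega>)\<^sup>2 \<partial>M)"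
      using that by (intro integral_square_diff_mult meas sfbm_square_integrable[OF X K]) auto
    then show ?thesis
      using that cov[of t t] cov[of t s] cov[of s s] by (simp add: power2_eq_square)
  qed
  with \<open>0 < C\<close> C \<epsilon> show ?thesis by fastforce
qed

lemma msfbm_second_moment_ge:
  fixes \<xi> :: "nat \<Rightarrow> real \<Rightarrow> 'a \<Rightarrow> real" and H a :: "nat \<Rightarrow> real"
  assumes M: "prob_space M"
    and indep: "prob_space.indep_vars M (\<lambda>i. Pi\<^sub>M {0::real..} (\<lambda>_. (borel :: real measure)))
                  (\<lambda>i \<omega>. \<lambda>t\<in>{0..}. \<xi> i t \<omega>) {1..N}"
    and sfbm: "\<forall>i\<in>{1..N}. is_sfbm M (H i) (\<xi> i)" and H: "\<forall>i\<in>{1..N}. 0 < H i \<and> H i < 1"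
    and i0: "i0 \<in> {1..N}" and st: "0 < s" "0 < t"
  shows "(a i0)\<^sup>2 * (\<integral>\<omega>. (\<xi> i0 t \<omega> - b * \<xi> i0 s \<omega>)\<^sup>2 \<partial>M)
    \<le> (\<integral>\<omega>. (msfbm N a \<xi> t \<omega> - b * msfbm N a \<xi> s \<omega>)\<^sup>2 \<partial>M)"
proof -
  interpret prob_space M by (rule M)
  define G where "G i \<omega> = \<xi> i t \<omega> - b * \<xi> i s \<omega>" for i \<omega>
  have meas: "\<xi> i u \<in> borel_measurable M" and sq: "integrable M (\<lambda>\<omega>. (\<xi> i u \<omega>)\<^sup>2)"
    and mean: "expectation (\<xi> i u) = 0" if "i \<in> {1..N}" "0 < u" for i u
    using sfbm H that sfbm_square_integrable[of M "H i" "\<xi> i" u] unfolding is_sfbm_def by auto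
  have "(\<lambda>f. f t - b * f s) \<in> Pi\<^sub>M {0::real..} (\<lambda>_. borel) \<rightarrow>\<^sub>M borel"
    using st by (intro borel_measurable_diff borel_measurable_times borel_measurable_const
        measurable_component_singleton) auto
  then have "indep_vars (\<lambda>_. borel) (\<lambda>i \<omega>. (\<lambda>f. f t - b * f s) (\<lambda>t\<in>{0..}. \<xi> i t \<omega>)) {1..N}"
    by (intro indep_vars_compose2[OF indep])
  also have "(\<lambda>i \<omega>. (\<lambda>f. f t - b * f s) (\<lambda>t\<in>{0..}. \<xi> i t \<omega>)) = G"
    using st by (auto simp: G_def fun_eq_iff)
  finally have "expectation (\<lambda>\<omega>. (\<Sum>i\<in>{1..N}. a i * G i \<omega>)\<^sup>2)
      = (\<Sum>i\<in>{1..N}. (a i)\<^sup>2 * expectation (\<lambda>\<omega>. (G i \<omega>)\<^sup>2))"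
    using meas sq mean st unfolding G_def
    by (intro integral_square_sum_indep_centered integrable_square_diff_mult)
      (auto simp: square_integrable_imp_integrable)
  also have "\<dots> \<ge> (a i0)\<^sup>2 * expectation (\<lambda>\<omega>. (G i0 \<omega>)\<^sup>2)"
    using i0 by (intro member_le_sum) auto
  finally show ?thesis
    by (simp add: G_def msfbm_def sum_distrib_left sum_subtractf[symmetric] algebra_simps)
qed

lemma cond_var_greatest:
  assumes "\<And>b. c \<le> (\<integral>\<omega>. (Y \<omega> - b * Z \<omega>)\<^sup>2 \<partial>M)"
  shows "c \<le> cond_var M Y Z"
  unfolding cond_var_def by (rule cINF_greatest) (use assms in auto)

theorem lemma17:
  fixes M :: "'a measure" and N :: nat and H a :: "nat \<Rightarrow> real"
    and \<xi> :: "nat \<Rightarrow> real \<Rightarrow> 'a \<Rightarrow> real" and \<epsilon> T :: real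
  assumes "prob_space M"
    and "N \<ge> 1"
    and "\<forall>i\<in>{1..N}. 0 < H i \<and> H i < 1"
    and "\<exists>i\<in>{1..N}. a i \<noteq> 0"
    and "\<forall>i\<in>{1..N}. is_sfbm M (H i) (\<xi> i)"
    and "prob_space.indep_vars M (\<lambda>i. Pi\<^sub>M {0::real..} (\<lambda>_. (borel :: real measure))) (\<lambda>i \<omega>. \<lambda>t\<in>{0..}. \<xi> i t \<omega>) {1..N}"
    and "0 < \<epsilon>" and "\<epsilon> < T"
  shows "\<exists>c>0. \<forall>s\<in>{\<epsilon>..T}. \<forall>t\<in>{\<epsilon>..T}.
           cond_var M (msfbm N a \<xi> t) (msfbm N a \<xi> s)
             \<ge> c * \<bar>s - t\<bar> powr (2 * Min {H i | i. i \<in> {1..N} \<and> a i \<noteq> 0})"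
proof -
  have A: "{H i | i. i \<in> {1..N} \<and> a i \<noteq> 0} = H ` {i \<in> {1..N}. a i \<noteq> 0}" by auto
  have "Min (H ` {i \<in> {1..N}. a i \<noteq> 0}) \<in> H ` {i \<in> {1..N}. a i \<noteq> 0}"
    using assms(4) by (intro Min_in) auto
  then obtain i0 where i0: "i0 \<in> {1..N}" "a i0 \<noteq> 0"
    and min: "Min {H i | i. i \<in> {1..N} \<and> a i \<noteq> 0} = H i0"
    unfolding A by auto
  obtain C where "0 < C" and C: "\<forall>s\<in>{\<epsilon>..T}. \<forall>t\<in>{\<epsilon>..T}. \<forall>b.
      C * \<bar>s - t\<bar> powr (2 * H i0) \<le> (\<integral>\<omega>. (\<xi> i0 t \<omega> - b * \<xi> i0 s \<omega>)\<^sup>2 \<partial>M)"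
    using sfbm_local_nondeterminism[of M "H i0" "\<xi> i0" \<epsilon> T] assms(3,5,7,8) i0(1) by auto
  have "(a i0)\<^sup>2 * C * \<bar>s - t\<bar> powr (2 * H i0) \<le> cond_var M (msfbm N a \<xi> t) (msfbm N a \<xi> s)"
    if "s \<in> {\<epsilon>..T}" "t \<in> {\<epsilon>..T}" for s t
  proof (rule cond_var_greatest)
    fix b
    have "(a i0)\<^sup>2 * C * \<bar>s - t\<bar> powr (2 * H i0)
        \<le> (a i0)\<^sup>2 * (\<integral>\<omega>. (\<xi> i0 t \<omega> - b * \<xi> i0 s \<omega>)\<^sup>2 \<partial>M)"
      using C that by (simp add: mult.assoc mult_left_mono)
    also have "\<dots> \<le> (\<integral>\<omega>. (msfbm N a \<xi> t \<omega> - b * msfbm N a \<xi> s \<omega>)\<^sup>2 \<partial>M)"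
      using assms i0 that by (intro msfbm_second_moment_ge) auto
    finally show "(a i0)\<^sup>2 * C * \<bar>s - t\<bar> powr (2 * H i0)
        \<le> (\<integral>\<omega>. (msfbm N a \<xi> t \<omega> - b * msfbm N a \<xi> s \<omega>)\<^sup>2 \<partial>M)" .
  qed
  moreover have "0 < (a i0)\<^sup>2 * C" using \<open>0 < C\<close> i0(2) by simp
  ultimately show ?thesis unfolding min by blast
qed

end
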